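(* Let $a,b,c,x,y\in X$ with $a\ge b$, $a\ne b$, $x\ge c$, $x\ne c$, $y\ge c$, $y\ne c$, and $x\ne y$. Then $\tau_{a,b}\,\tau_{[x,y],c}\,\tau_{a,b}^{-1}\in K_{\{a,b,c,x,y\}}$.
   Context: $\Gamma$ is a finite simplicial graph with vertex set $X$, $A_\Gamma$ its right-angled Artin group ($x,y\in X$ commute iff adjacent). $L=X\cup X^{-1}$; for $u\in L$, $\bar u\in X$ is the vertex with $u\in\{\bar u,\bar u^{-1}\}$. $\mathrm{lk}(v)$ is the set of neighbours of $v$, $\mathrm{st}(v)=\mathrm{lk}(v)\cup\{v\}$. Domination: $v\ge w$ iff $\mathrm{lk}(w)\subset\mathrm{st}(v)$; for letters, $u\ge u'$ iff $\bar u\ge\bar u'$. For $u,v\in L$ with $u\ge v$, $\bar u\ne\bar v$, the transvection $\tau_{u,v}$ sends $v\mapsto vu$ and fixes all generators other than $\bar v$. For $u\ge v$, $\bar u\ne\bar v$, $c_{u,\{v\}}$ sends $v\mapsto u^{-1}vu$ and fixes all other generators. For $x,y,c\in L$ with $x,y\ge c$ and $\bar x,\bar y,\bar c$ distinct, $\tau_{[x,y],c}$ sends $c\mapsto c[x,y]$ (with $[x,y]=xyx^{-1}y^{-1}$) and fixes all generators other than $\bar c$. For $Z\subset X$, $K_Z\le\mathrm{Aut}\,A_\Gamma$ is generated by all $\tau_{[x,y],c}$ and all $c_{x,\{c\}}$ with $x,y,c\in Z$ and $x,y\ge c$ (distinct where required), together with all inner automorphisms. *)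

theory Defs
  imports "HOL-Algebra.Algebra"
begin

definition simple_graph :: "'a set \<Rightarrow> ('a \<Rightarrow> 'a \<Rightarrow> bool) \<Rightarrow> bool" where
  "simple_graph V Adj \<longleftrightarrow> finite V \<and> (\<forall>u v. Adj u v \<longrightarrow> u \<in> V \<and> v \<in> V \<and> Adj v u \<and> u \<noteq> v)"

definition lk :: "'a set \<Rightarrow> ('a \<Rightarrow> 'a \<Rightarrow> bool) \<Rightarrow> 'a \<Rightarrow> 'a set" where
  "lk V Adj v = {w \<in> V. Adj v w}"

definition st :: "'a set \<Rightarrow> ('a \<Rightarrow> 'a \<Rightarrow> bool) \<Rightarrow> 'a \<Rightarrow> 'a set" where
  "st V Adj v = insert v (lk V Adj v)"

text \<open>Domination of vertices: v \<ge> w iff lk(w) \<subseteq> st(v).\<close>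
definition dominates :: "'a set \<Rightarrow> ('a \<Rightarrow> 'a \<Rightarrow> bool) \<Rightarrow> 'a \<Rightarrow> 'a \<Rightarrow> bool" where
  "dominates V Adj v w \<longleftrightarrow> lk V Adj w \<subseteq> st V Adj v"

text \<open>A letter is a pair (v, s): (v, True) is the generator v, (v, False) is v^-1.\<close>
type_synonym 'a letter = "'a \<times> bool"
type_synonym 'a word = "'a letter list"

definition letters :: "'a set \<Rightarrow> 'a letter set" where
  "letters V = V \<times> UNIV"

definition bar :: "'a letter \<Rightarrow> 'a" where
  "bar u = fst u"

definition linv :: "'a letter \<Rightarrow> 'a letter" where
  "linv u = (fst u, \<not> snd u)"

definition winv :: "'a word \<Rightarrow> 'a word" where
  "winv w = rev (map linv w)"

definition ldom :: "'a set \<Rightarrow> ('a \<Rightarrow> 'a \<Rightarrow> bool) \<Rightarrow> 'a letter \<Rightarrow> 'a letter \<Rightarrow> bool" where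
  "ldom V Adj u v \<longleftrightarrow> dominates V Adj (bar u) (bar v)"

definition raag_step :: "'a set \<Rightarrow> ('a \<Rightarrow> 'a \<Rightarrow> bool) \<Rightarrow> ('a word \<times> 'a word) set" where
  "raag_step V Adj =
     {(u @ [l, linv l] @ v, u @ v) | u v l.
        set u \<subseteq> letters V \<and> set v \<subseteq> letters V \<and> l \<in> letters V}
   \<union> {(u @ [l1, l2] @ v, u @ [l2, l1] @ v) | u v l1 l2.
        set u \<subseteq> letters V \<and> set v \<subseteq> letters V \<and> l1 \<in> letters V \<and> l2 \<in> letters V
        \<and> Adj (bar l1) (bar l2)}"

definition raag_eq :: "'a set \<Rightarrow> ('a \<Rightarrow> 'a \<Rightarrow> bool) \<Rightarrow> ('a word \<times> 'a word) set" where
  "raag_eq V Adj = (raag_step V Adj \<union> (raag_step V Adj)\<inverse>)\<^sup>*"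

definition cls :: "'a set \<Rightarrow> ('a \<Rightarrow> 'a \<Rightarrow> bool) \<Rightarrow> 'a word \<Rightarrow> 'a word set" where
  "cls V Adj w = raag_eq V Adj `` {w}"

definition RAAG :: "'a set \<Rightarrow> ('a \<Rightarrow> 'a \<Rightarrow> bool) \<Rightarrow> 'a word set monoid" where
  "RAAG V Adj =
     \<lparr>carrier = lists (letters V) // raag_eq V Adj,
      monoid.mult = (\<lambda>A B. \<Union>a\<in>A. \<Union>b\<in>B. cls V Adj (a @ b)),
      monoid.one = cls V Adj []\<rparr>"

definition subst :: "('a \<Rightarrow> 'a word) \<Rightarrow> 'a word \<Rightarrow> 'a word" where
  "subst \<sigma> w = concat (map (\<lambda>l. if snd l then \<sigma> (fst l) else winv (\<sigma> (fst l))) w)"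

definition ind_hom :: "'a set \<Rightarrow> ('a \<Rightarrow> 'a \<Rightarrow> bool) \<Rightarrow> ('a \<Rightarrow> 'a word) \<Rightarrow> 'a word set \<Rightarrow> 'a word set" where
  "ind_hom V Adj \<sigma> = (\<lambda>A \<in> carrier (RAAG V Adj). \<Union>w\<in>A. cls V Adj (subst \<sigma> w))"

definition letter_map :: "'a letter \<Rightarrow> 'a word \<Rightarrow> 'a \<Rightarrow> 'a word" where
  "letter_map v img z = (if z = bar v then (if snd v then img else winv img) else [(z, True)])"

text \<open>Transvection tau_{u,v}: v \<mapsto> v u.\<close>
definition transv :: "'a set \<Rightarrow> ('a \<Rightarrow> 'a \<Rightarrow> bool) \<Rightarrow> 'a letter \<Rightarrow> 'a letter \<Rightarrow> 'a word set \<Rightarrow> 'a word set" where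
  "transv V Adj u v = ind_hom V Adj (letter_map v [v, u])"

text \<open>Partial conjugation c_{u,{v}}: v \<mapsto> u^-1 v u.\<close>
definition pconj :: "'a set \<Rightarrow> ('a \<Rightarrow> 'a \<Rightarrow> bool) \<Rightarrow> 'a letter \<Rightarrow> 'a letter \<Rightarrow> 'a word set \<Rightarrow> 'a word set" where
  "pconj V Adj u v = ind_hom V Adj (letter_map v [linv u, v, u])"

text \<open>Commutator transvection tau_{[x,y],c}: c \<mapsto> c [x,y] = c x y x^-1 y^-1.\<close>
definition ctransv :: "'a set \<Rightarrow> ('a \<Rightarrow> 'a \<Rightarrow> bool) \<Rightarrow> 'a letter \<Rightarrow> 'a letter \<Rightarrow> 'a letter \<Rightarrow> 'a word set \<Rightarrow> 'a word set" where
  "ctransv V Adj x y c = ind_hom V Adj (letter_map c [c, x, y, linv x, linv y])"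

definition inner :: "'a set \<Rightarrow> ('a \<Rightarrow> 'a \<Rightarrow> bool) \<Rightarrow> 'a word set \<Rightarrow> 'a word set \<Rightarrow> 'a word set" where
  "inner V Adj g = (\<lambda>A \<in> carrier (RAAG V Adj).
      inv\<^bsub>RAAG V Adj\<^esub> g \<otimes>\<^bsub>RAAG V Adj\<^esub> A \<otimes>\<^bsub>RAAG V Adj\<^esub> g)"

definition K_gens :: "'a set \<Rightarrow> ('a \<Rightarrow> 'a \<Rightarrow> bool) \<Rightarrow> 'a set \<Rightarrow> ('a word set \<Rightarrow> 'a word set) set" where
  "K_gens V Adj Z =
     {ctransv V Adj x y c | x y c. x \<in> letters V \<and> y \<in> letters V \<and> c \<in> letters V
        \<and> bar x \<in> Z \<and> bar y \<in> Z \<and> bar c \<in> Z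
        \<and> ldom V Adj x c \<and> ldom V Adj y c
        \<and> bar x \<noteq> bar y \<and> bar x \<noteq> bar c \<and> bar y \<noteq> bar c}
   \<union> {pconj V Adj x c | x c. x \<in> letters V \<and> c \<in> letters V
        \<and> bar x \<in> Z \<and> bar c \<in> Z \<and> ldom V Adj x c \<and> bar x \<noteq> bar c}
   \<union> {inner V Adj g | g. g \<in> carrier (RAAG V Adj)}"

definition K :: "'a set \<Rightarrow> ('a \<Rightarrow> 'a \<Rightarrow> bool) \<Rightarrow> 'a set \<Rightarrow> ('a word set \<Rightarrow> 'a word set) set" where
  "K V Adj Z = generate (AutoGroup (RAAG V Adj)) (K_gens V Adj Z)"

end

theory Submission
  imports Defs
begin

text \<open>Write \<tau> = \<tau>_{a,b} and \<kappa> = \<tau>_{[x,y],c}. An endomorphism of A_\<Gamma> given by words on the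
  generators only depends on the classes of these words, and composition of such endomorphisms
  is substitution of words. So \<tau> \<kappa> \<tau>\<inverse> is induced by an explicit substitution, which moves at
  most the generators b and c. Distinguishing how a and b meet {c, x, y}, one exhibits a product
  of partial conjugations and commutator transvections with letters in {a, b, c, x, y} inducing,
  generator by generator, the same freely reduced words; for instance \<tau> \<kappa> \<tau>\<inverse> =
  c_{a,{c}} \<kappa> c_{a,{c}}\<inverse> when b = c. The dominations needed for the factors follow from
  transitivity of domination.\<close>

text \<open>Keep membership in \<open>lists (letters V)\<close> atomic for the classical reasoner, so that it
  matches the premises of the lemmas below instead of being split into quantifiers over \<open>set\<close>.\<close>
declare in_listsD [rule del] in_listspD [rule del] in_listsI [rule del] in_listspI [rule del]

lemma letters_iff [simp]: "l \<in> letters V \<longleftrightarrow> fst l \<in> V"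
  by (cases l) (auto simp: letters_def)

lemma linv_linv [simp]: "linv (linv l) = l" by (simp add: linv_def)
lemma fst_linv [simp]: "fst (linv l) = fst l" by (simp add: linv_def)
lemma snd_linv [simp]: "snd (linv l) = (\<not> snd l)" by (simp add: linv_def)
lemma linv_neq [simp]: "linv l \<noteq> l" "l \<noteq> linv l" by (auto simp: linv_def prod_eq_iff)

lemma winv_Nil [simp]: "winv [] = []" by (simp add: winv_def)
lemma winv_Cons [simp]: "winv (l # w) = winv w @ [linv l]" by (simp add: winv_def)
lemma winv_append [simp]: "winv (u @ w) = winv w @ winv u" by (simp add: winv_def)
lemma winv_winv [simp]: "winv (winv w) = w" by (induction w) auto
lemma set_winv [simp]: "set (winv w) = linv ` set w" by (simp add: winv_def)
lemma winv_in_lists_iff [simp]: "winv w \<in> lists (letters V) \<longleftrightarrow> w \<in> lists (letters V)"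
  by (auto simp: winv_def in_lists_conv_set)

section \<open>The defining congruence of A_\<Gamma>\<close>

lemma raag_step_lists:
  "(u, v) \<in> raag_step V Adj \<Longrightarrow> u \<in> lists (letters V) \<and> v \<in> lists (letters V)"
  unfolding raag_step_def in_lists_conv_set
  by (auto simp: letters_def bar_def linv_def simp del: letters_iff)

lemma raag_eq_refl: "(w, w) \<in> raag_eq V Adj"
  by (simp add: raag_eq_def)

lemma raag_eq_sym: "(u, v) \<in> raag_eq V Adj \<Longrightarrow> (v, u) \<in> raag_eq V Adj"
  unfolding raag_eq_def by (rule symD[OF sym_rtrancl[OF sym_Un_converse]])

lemma raag_eq_trans:
  "(u, v) \<in> raag_eq V Adj \<Longrightarrow> (v, w) \<in> raag_eq V Adj \<Longrightarrow> (u, w) \<in> raag_eq V Adj"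
  unfolding raag_eq_def by (rule rtrancl_trans)

lemma raag_eq_lists:
  "(u, v) \<in> raag_eq V Adj \<Longrightarrow> u \<in> lists (letters V) \<Longrightarrow> v \<in> lists (letters V)"
  unfolding raag_eq_def by (induction rule: rtrancl_induct) (auto dest: raag_step_lists)

lemma raag_eq_map:
  assumes step_eq: "\<And>u v. (u, v) \<in> raag_step V Adj \<Longrightarrow> (f u, f v) \<in> raag_eq V Adj"
    and "(u, v) \<in> raag_eq V Adj"
  shows "(f u, f v) \<in> raag_eq V Adj"
  using assms(2) unfolding raag_eq_def
proof (induction rule: rtrancl_induct)
  case base
  show ?case by simp
next
  case (step v w)
  then have "(f v, f w) \<in> raag_eq V Adj"
    using step_eq raag_eq_sym by blast
  with step.IH show ?case
    unfolding raag_eq_def by (rule rtrancl_trans)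
qed

lemma raag_step_context:
  assumes "(u, v) \<in> raag_step V Adj" "p \<in> lists (letters V)" "q \<in> lists (letters V)"
  shows "(p @ u @ q, p @ v @ q) \<in> raag_step V Adj"
proof -
  have pq: "set p \<subseteq> letters V" "set q \<subseteq> letters V"
    using assms(2,3) by (simp_all add: in_lists_conv_set subset_iff)
  from assms(1)[unfolded raag_step_def] show ?thesis
  proof (elim UnE CollectE exE conjE)
    fix u' v' l
    assume "(u, v) = (u' @ [l, linv l] @ v', u' @ v')" "set u' \<subseteq> letters V"
      "set v' \<subseteq> letters V" "l \<in> letters V"
    with pq have "(p @ u @ q, p @ v @ q) = ((p @ u') @ [l, linv l] @ (v' @ q), (p @ u') @ (v' @ q))"
      "set (p @ u') \<subseteq> letters V" "set (v' @ q) \<subseteq> letters V" by auto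
    with \<open>l \<in> letters V\<close> show ?thesis
      unfolding raag_step_def by blast
  next
    fix u' v' l1 l2
    assume "(u, v) = (u' @ [l1, l2] @ v', u' @ [l2, l1] @ v')" "set u' \<subseteq> letters V"
      "set v' \<subseteq> letters V" "l1 \<in> letters V" "l2 \<in> letters V" "Adj (bar l1) (bar l2)"
    with pq have "(p @ u @ q, p @ v @ q)
        = ((p @ u') @ [l1, l2] @ (v' @ q), (p @ u') @ [l2, l1] @ (v' @ q))"
      "set (p @ u') \<subseteq> letters V" "set (v' @ q) \<subseteq> letters V" by auto
    with \<open>l1 \<in> letters V\<close> \<open>l2 \<in> letters V\<close> \<open>Adj (bar l1) (bar l2)\<close> show ?thesis
      unfolding raag_step_def by blast
  qed
qed

lemma raag_eq_context:
  "(u, v) \<in> raag_eq V Adj \<Longrightarrow> p \<in> lists (letters V) \<Longrightarrow> q \<in> lists (letters V)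
    \<Longrightarrow> (p @ u @ q, p @ v @ q) \<in> raag_eq V Adj"
  by (rule raag_eq_map[where f="\<lambda>w. p @ w @ q"])
    (simp_all add: raag_eq_def r_into_rtrancl raag_step_context)

lemma raag_eq_append:
  assumes "(u, u') \<in> raag_eq V Adj" "(v, v') \<in> raag_eq V Adj"
    and "u \<in> lists (letters V)" "v \<in> lists (letters V)"
  shows "(u @ v, u' @ v') \<in> raag_eq V Adj"
proof -
  have "(u @ v, u' @ v) \<in> raag_eq V Adj"
    using raag_eq_context[OF assms(1), of "[]" v] assms(4) by simp
  moreover have "(u' @ v, u' @ v') \<in> raag_eq V Adj"
    using raag_eq_context[OF assms(2), of u' "[]"] raag_eq_lists[OF assms(1,3)] by simp
  ultimately show ?thesis by (rule raag_eq_trans)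
qed

lemma raag_eq_cancel: "fst l \<in> V \<Longrightarrow> ([l, linv l], []) \<in> raag_eq V Adj"
proof -
  assume "fst l \<in> V"
  then have "([] @ [l, linv l] @ [], [] @ []) \<in> raag_step V Adj"
    unfolding raag_step_def by (intro UnI1 CollectI exI[of _ "[]"] exI[of _ l]) simp
  then show ?thesis unfolding raag_eq_def by (simp add: r_into_rtrancl)
qed

lemma raag_eq_adjacent:
  "fst l \<in> V \<Longrightarrow> fst m \<in> V \<Longrightarrow> Adj (fst l) (fst m) \<Longrightarrow> ([l, m], [m, l]) \<in> raag_eq V Adj"
proof -
  assume "fst l \<in> V" "fst m \<in> V" "Adj (fst l) (fst m)"
  then have "([] @ [l, m] @ [], [] @ [m, l] @ []) \<in> raag_step V Adj"
    unfolding raag_step_def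
    by (intro UnI2 CollectI exI[of _ "[]"] exI[of _ l] exI[of _ m]) (simp add: bar_def)
  then show ?thesis unfolding raag_eq_def by (simp add: r_into_rtrancl)
qed

definition commuting :: "('a \<Rightarrow> 'a \<Rightarrow> bool) \<Rightarrow> 'a word \<Rightarrow> 'a word \<Rightarrow> bool" where
  "commuting Adj u w \<longleftrightarrow> (\<forall>l\<in>set u. \<forall>m\<in>set w. fst l = fst m \<or> Adj (fst l) (fst m))"

lemma commuting_iff_fst:
  "commuting Adj u w \<longleftrightarrow> (\<forall>p\<in>fst ` set u. \<forall>q\<in>fst ` set w. p = q \<or> Adj p q)"
  by (auto simp: commuting_def)

lemma raag_eq_swap_letters:
  assumes "fst l \<in> V" "fst m \<in> V" "fst l = fst m \<or> Adj (fst l) (fst m)"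
  shows "([l, m], [m, l]) \<in> raag_eq V Adj"
proof -
  consider "Adj (fst l) (fst m)" | "m = l" | "m = linv l"
    using assms(3) by (cases l, cases m) (auto simp: linv_def)
  then show ?thesis
  proof cases
    case 1
    with assms(1,2) show ?thesis by (rule raag_eq_adjacent)
  next
    case 2
    then show ?thesis by (simp add: raag_eq_refl)
  next
    case 3
    have "([l, m], []) \<in> raag_eq V Adj" "([m, l], []) \<in> raag_eq V Adj"
      using raag_eq_cancel[of l] raag_eq_cancel[of "linv l"] assms(1) 3 by simp_all
    then show ?thesis by (rule raag_eq_trans[OF _ raag_eq_sym])
  qed
qed

lemma raag_eq_swap_letter_word:
  "fst l \<in> V \<Longrightarrow> w \<in> lists (letters V) \<Longrightarrow> commuting Adj [l] w
    \<Longrightarrow> (l # w, w @ [l]) \<in> raag_eq V Adj"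
proof (induction w)
  case Nil
  then show ?case by (simp add: raag_eq_refl)
next
  case (Cons m w)
  have "([l, m] @ w, [m, l] @ w) \<in> raag_eq V Adj"
    using Cons.prems
    by (intro raag_eq_append[OF raag_eq_swap_letters raag_eq_refl]) (auto simp: commuting_def)
  moreover have "([m] @ l # w, [m] @ w @ [l]) \<in> raag_eq V Adj"
    using Cons by (intro raag_eq_append[OF raag_eq_refl]) (auto simp: commuting_def)
  ultimately show ?case
    using raag_eq_trans[of "l # m # w" "m # l # w" V Adj "m # w @ [l]"] by simp
qed

lemma raag_eq_swap_words:
  "u \<in> lists (letters V) \<Longrightarrow> w \<in> lists (letters V) \<Longrightarrow> commuting Adj u w
    \<Longrightarrow> (u @ w, w @ u) \<in> raag_eq V Adj"
proof (induction u)
  case Nil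
  then show ?case by (simp add: raag_eq_refl)
next
  case (Cons l u)
  have "([l] @ u @ w, [l] @ w @ u) \<in> raag_eq V Adj"
    using Cons by (intro raag_eq_append[OF raag_eq_refl]) (auto simp: commuting_def)
  moreover have "((l # w) @ u, (w @ [l]) @ u) \<in> raag_eq V Adj"
    using Cons.prems
    by (intro raag_eq_append[OF raag_eq_swap_letter_word raag_eq_refl]) (auto simp: commuting_def)
  ultimately show ?case
    using raag_eq_trans[of "l # u @ w" "l # w @ u" V Adj "w @ l # u"] by simp
qed

fun free_reduce :: "'a word \<Rightarrow> 'a word" where
  "free_reduce [] = []"
| "free_reduce (l # w) =
    (case free_reduce w of [] \<Rightarrow> [l] | m # r \<Rightarrow> if m = linv l then r else l # m # r)"

lemma free_reduce_raag_eq: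
  "w \<in> lists (letters V) \<Longrightarrow>
    free_reduce w \<in> lists (letters V) \<and> (w, free_reduce w) \<in> raag_eq V Adj"
proof (induction w)
  case Nil
  then show ?case by (simp add: raag_eq_refl)
next
  case (Cons l w)
  then have l: "fst l \<in> V" and IH: "free_reduce w \<in> lists (letters V)"
    "(w, free_reduce w) \<in> raag_eq V Adj" by auto
  have head: "([l] @ w, [l] @ free_reduce w) \<in> raag_eq V Adj"
    using Cons.prems IH by (intro raag_eq_append[OF raag_eq_refl]) auto
  show ?case
  proof (cases "free_reduce w")
    case Nil
    with head l show ?thesis by simp
  next
    case (Cons m r)
    with IH(1) have r: "r \<in> lists (letters V)" by simp
    show ?thesis
    proof (cases "m = linv l")
      case True
      have "([l, linv l] @ r, [] @ r) \<in> raag_eq V Adj"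
        using l r by (intro raag_eq_append[OF raag_eq_cancel raag_eq_refl]) auto
      with head Cons True have "(l # w, r) \<in> raag_eq V Adj"
        using raag_eq_trans[of "l # w" "l # m # r" V Adj r] by simp
      with Cons True r show ?thesis by simp
    next
      case False
      with head Cons l IH(1) show ?thesis by simp
    qed
  qed
qed

lemma raag_eq_if_free_reduce_eq:
  "u \<in> lists (letters V) \<Longrightarrow> w \<in> lists (letters V) \<Longrightarrow> free_reduce u = free_reduce w
    \<Longrightarrow> (u, w) \<in> raag_eq V Adj"
  using raag_eq_trans[OF _ raag_eq_sym] free_reduce_raag_eq by metis

lemma cls_self: "w \<in> cls V Adj w"
  by (simp add: cls_def raag_eq_refl)

lemma cls_eq_iff: "cls V Adj u = cls V Adj w \<longleftrightarrow> (u, w) \<in> raag_eq V Adj"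
proof
  assume "cls V Adj u = cls V Adj w"
  then have "w \<in> cls V Adj u" by (simp add: cls_self)
  then show "(u, w) \<in> raag_eq V Adj" by (simp add: cls_def)
next
  assume uw: "(u, w) \<in> raag_eq V Adj"
  show "cls V Adj u = cls V Adj w"
    unfolding cls_def using raag_eq_trans[OF uw] raag_eq_trans[OF raag_eq_sym[OF uw]] by blast
qed

lemma carrier_RAAG: "carrier (RAAG V Adj) = {cls V Adj w | w. w \<in> lists (letters V)}"
  by (auto simp: RAAG_def quotient_def cls_def)

lemma cls_in_carrier: "w \<in> lists (letters V) \<Longrightarrow> cls V Adj w \<in> carrier (RAAG V Adj)"
  by (auto simp: carrier_RAAG)

lemma carrier_RAAG_cases:
  "A \<in> carrier (RAAG V Adj) \<Longrightarrow> (\<And>w. w \<in> lists (letters V) \<Longrightarrow> A = cls V Adj w \<Longrightarrow> P) \<Longrightarrow> P"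
  unfolding carrier_RAAG by blast

lemma one_RAAG: "\<one>\<^bsub>RAAG V Adj\<^esub> = cls V Adj []"
  by (simp add: RAAG_def)

lemma mult_cls:
  assumes "u \<in> lists (letters V)" "v \<in> lists (letters V)"
  shows "cls V Adj u \<otimes>\<^bsub>RAAG V Adj\<^esub> cls V Adj v = cls V Adj (u @ v)"
proof -
  have "cls V Adj (u' @ v') = cls V Adj (u @ v)" if "u' \<in> cls V Adj u" "v' \<in> cls V Adj v" for u' v'
  proof -
    from that have "(u, u') \<in> raag_eq V Adj" "(v, v') \<in> raag_eq V Adj"
      by (simp_all add: cls_def)
    then show ?thesis
      unfolding cls_eq_iff by (rule raag_eq_sym[OF raag_eq_append[OF _ _ assms]])
  qed
  then have "(\<Union>u'\<in>cls V Adj u. \<Union>v'\<in>cls V Adj v. cls V Adj (u' @ v'))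
      = (\<Union>u'\<in>cls V Adj u. \<Union>v'\<in>cls V Adj v. cls V Adj (u @ v))"
    by (intro SUP_cong refl) simp
  also have "\<dots> = cls V Adj (u @ v)"
    using cls_self[of u V Adj] cls_self[of v V Adj] by blast
  finally show ?thesis by (simp add: RAAG_def)
qed

lemma raag_eq_append_winv: "u \<in> lists (letters V) \<Longrightarrow> (u @ winv u, []) \<in> raag_eq V Adj"
proof (induction u)
  case Nil
  then show ?case by (simp add: raag_eq_refl)
next
  case (Cons l u)
  then have "([l] @ (u @ winv u) @ [linv l], [l] @ [] @ [linv l]) \<in> raag_eq V Adj"
    by (intro raag_eq_context) auto
  moreover have "([l, linv l], []) \<in> raag_eq V Adj"
    using Cons.prems by (intro raag_eq_cancel) auto
  ultimately show ?case
    using raag_eq_trans[of "l # u @ winv u @ [linv l]" "[l, linv l]" V Adj "[]"] by simp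
qed

lemma raag_eq_winv_append: "u \<in> lists (letters V) \<Longrightarrow> (winv u @ u, []) \<in> raag_eq V Adj"
  using raag_eq_append_winv[of "winv u" V Adj] by simp

lemma group_RAAG: "group (RAAG V Adj)"
proof (rule groupI)
  fix A
  assume "A \<in> carrier (RAAG V Adj)"
  then obtain u where u: "u \<in> lists (letters V)" "A = cls V Adj u"
    by (rule carrier_RAAG_cases)
  then have "cls V Adj (winv u) \<otimes>\<^bsub>RAAG V Adj\<^esub> A = \<one>\<^bsub>RAAG V Adj\<^esub>"
    by (simp add: mult_cls one_RAAG cls_eq_iff raag_eq_winv_append)
  moreover have "cls V Adj (winv u) \<in> carrier (RAAG V Adj)"
    using u by (simp add: cls_in_carrier)
  ultimately show "\<exists>B\<in>carrier (RAAG V Adj). B \<otimes>\<^bsub>RAAG V Adj\<^esub> A = \<one>\<^bsub>RAAG V Adj\<^esub>"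
    by blast
qed (auto simp: carrier_RAAG mult_cls one_RAAG)

lemma inv_cls: "u \<in> lists (letters V) \<Longrightarrow> inv\<^bsub>RAAG V Adj\<^esub> (cls V Adj u) = cls V Adj (winv u)"
  by (rule group.inv_equality[OF group_RAAG])
    (simp_all add: mult_cls one_RAAG cls_eq_iff raag_eq_winv_append cls_in_carrier)

lemma raag_eq_winv:
  "(u, u') \<in> raag_eq V Adj \<Longrightarrow> u \<in> lists (letters V) \<Longrightarrow> (winv u, winv u') \<in> raag_eq V Adj"
  by (metis cls_eq_iff inv_cls raag_eq_lists)

section \<open>Endomorphisms induced by substitutions\<close>

lemma subst_Nil [simp]: "subst \<sigma> [] = []"
  by (simp add: subst_def)

lemma subst_Cons [simp]:
  "subst \<sigma> (l # w) = (if snd l then \<sigma> (fst l) else winv (\<sigma> (fst l))) @ subst \<sigma> w"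
  by (simp add: subst_def)

lemma subst_append [simp]: "subst \<sigma> (u @ w) = subst \<sigma> u @ subst \<sigma> w"
  by (simp add: subst_def)

lemma subst_winv [simp]: "subst \<sigma> (winv u) = winv (subst \<sigma> u)"
  by (induction u) auto

definition subst_comp :: "('a \<Rightarrow> 'a word) \<Rightarrow> ('a \<Rightarrow> 'a word) \<Rightarrow> 'a \<Rightarrow> 'a word" where
  "subst_comp \<sigma> \<rho> = (\<lambda>z. subst \<sigma> (\<rho> z))"

lemma subst_subst: "subst \<sigma> (subst \<rho> w) = subst (subst_comp \<sigma> \<rho>) w"
  by (induction w) (auto simp: subst_comp_def)

lemma subst_generators: "subst (\<lambda>z. [(z, True)]) w = w"
  by (induction w) (auto simp: linv_def)

lemma fst_set_subst_letter: "fst ` set (subst \<sigma> [l]) = fst ` set (\<sigma> (fst l))"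
  by (simp add: image_image)

definition words_over :: "'a set \<Rightarrow> ('a \<Rightarrow> 'a word) \<Rightarrow> bool" where
  "words_over V \<sigma> \<longleftrightarrow> (\<forall>z\<in>V. \<sigma> z \<in> lists (letters V))"

lemma subst_in_lists: "words_over V \<sigma> \<Longrightarrow> w \<in> lists (letters V) \<Longrightarrow> subst \<sigma> w \<in> lists (letters V)"
  by (induction w) (auto simp: words_over_def)

lemma raag_eq_subst_pointwise:
  assumes words: "words_over V \<sigma>" "words_over V \<sigma>'"
    and pointwise: "\<forall>z\<in>V. (\<sigma> z, \<sigma>' z) \<in> raag_eq V Adj"
  shows "w \<in> lists (letters V) \<Longrightarrow> (subst \<sigma> w, subst \<sigma>' w) \<in> raag_eq V Adj"
proof (induction w)
  case Nil
  then show ?case by (simp add: raag_eq_refl)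
next
  case (Cons l w)
  then have l: "fst l \<in> V" and w: "w \<in> lists (letters V)" by auto
  have "(subst \<sigma> [l], subst \<sigma>' [l]) \<in> raag_eq V Adj"
    using l words pointwise raag_eq_winv[of "\<sigma> (fst l)" "\<sigma>' (fst l)" V Adj]
    by (auto simp: words_over_def)
  moreover have "subst \<sigma> [l] \<in> lists (letters V)"
    using l by (intro subst_in_lists[OF words(1)]) auto
  ultimately have "(subst \<sigma> [l] @ subst \<sigma> w, subst \<sigma>' [l] @ subst \<sigma>' w) \<in> raag_eq V Adj"
    using Cons.IH w subst_in_lists[OF words(1) w] by (intro raag_eq_append) auto
  then show ?case
    using subst_append[of _ "[l]" w] by simp
qed

definition compatible :: "'a set \<Rightarrow> ('a \<Rightarrow> 'a \<Rightarrow> bool) \<Rightarrow> ('a \<Rightarrow> 'a word) \<Rightarrow> bool" where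
  "compatible V Adj \<sigma> \<longleftrightarrow> words_over V \<sigma> \<and>
     (\<forall>w w'. w \<in> lists (letters V) \<longrightarrow> (w, w') \<in> raag_eq V Adj
        \<longrightarrow> (subst \<sigma> w, subst \<sigma> w') \<in> raag_eq V Adj)"

lemma compatible_words_over: "compatible V Adj \<sigma> \<Longrightarrow> words_over V \<sigma>"
  by (simp add: compatible_def)

lemma compatible_generators: "compatible V Adj (\<lambda>z. [(z, True)])"
  by (simp add: compatible_def words_over_def subst_generators in_lists_conv_set)

lemma compatible_subst_comp:
  assumes \<sigma>: "compatible V Adj \<sigma>" and \<rho>: "compatible V Adj \<rho>"
  shows "compatible V Adj (subst_comp \<sigma> \<rho>)"
  unfolding compatible_def
proof (intro conjI allI impI)
  show "words_over V (subst_comp \<sigma> \<rho>)"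
    using subst_in_lists[OF compatible_words_over[OF \<sigma>]] compatible_words_over[OF \<rho>]
    by (simp add: words_over_def subst_comp_def)
next
  fix w w'
  assume w: "w \<in> lists (letters V)" and "(w, w') \<in> raag_eq V Adj"
  with \<rho> have "(subst \<rho> w, subst \<rho> w') \<in> raag_eq V Adj"
    by (simp add: compatible_def)
  with \<sigma> subst_in_lists[OF compatible_words_over[OF \<rho>] w]
  show "(subst (subst_comp \<sigma> \<rho>) w, subst (subst_comp \<sigma> \<rho>) w') \<in> raag_eq V Adj"
    by (simp add: compatible_def subst_subst[symmetric])
qed

lemma ind_hom_cls:
  assumes "compatible V Adj \<sigma>" "w \<in> lists (letters V)"
  shows "ind_hom V Adj \<sigma> (cls V Adj w) = cls V Adj (subst \<sigma> w)"
proof -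
  have "cls V Adj (subst \<sigma> w') = cls V Adj (subst \<sigma> w)" if "w' \<in> cls V Adj w" for w'
  proof -
    from that have "(w, w') \<in> raag_eq V Adj" by (simp add: cls_def)
    with assms have "(subst \<sigma> w, subst \<sigma> w') \<in> raag_eq V Adj" by (simp add: compatible_def)
    then show ?thesis unfolding cls_eq_iff by (rule raag_eq_sym)
  qed
  then have "(\<Union>w'\<in>cls V Adj w. cls V Adj (subst \<sigma> w')) = (\<Union>w'\<in>cls V Adj w. cls V Adj (subst \<sigma> w))"
    by (intro SUP_cong refl) simp
  also have "\<dots> = cls V Adj (subst \<sigma> w)"
    using cls_self[of w V Adj] by blast
  finally show ?thesis
    using cls_in_carrier[OF assms(2)] by (simp add: ind_hom_def)
qed

lemma ind_hom_extensional: "ind_hom V Adj \<sigma> \<in> extensional (carrier (RAAG V Adj))"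
  by (simp add: ind_hom_def)

lemma ind_hom_eqI:
  assumes "compatible V Adj \<sigma>" "compatible V Adj \<sigma>'"
    and "\<forall>z\<in>V. (\<sigma> z, \<sigma>' z) \<in> raag_eq V Adj"
  shows "ind_hom V Adj \<sigma> = ind_hom V Adj \<sigma>'"
proof (rule extensionalityI[OF ind_hom_extensional ind_hom_extensional])
  fix A
  assume "A \<in> carrier (RAAG V Adj)"
  then obtain w where "w \<in> lists (letters V)" "A = cls V Adj w"
    by (rule carrier_RAAG_cases)
  with assms show "ind_hom V Adj \<sigma> A = ind_hom V Adj \<sigma>' A"
    by (simp add: ind_hom_cls cls_eq_iff raag_eq_subst_pointwise compatible_words_over)
qed

lemma ind_hom_generators: "ind_hom V Adj (\<lambda>z. [(z, True)]) = (\<lambda>A \<in> carrier (RAAG V Adj). A)"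
proof (rule extensionalityI[OF ind_hom_extensional])
  fix A
  assume "A \<in> carrier (RAAG V Adj)"
  then show "ind_hom V Adj (\<lambda>z. [(z, True)]) A = (\<lambda>A \<in> carrier (RAAG V Adj). A) A"
    by (auto elim: carrier_RAAG_cases simp: ind_hom_cls compatible_generators subst_generators)
qed simp

lemma ind_hom_in_carrier:
  "compatible V Adj \<sigma> \<Longrightarrow> A \<in> carrier (RAAG V Adj) \<Longrightarrow> ind_hom V Adj \<sigma> A \<in> carrier (RAAG V Adj)"
  by (auto elim!: carrier_RAAG_cases
      simp: ind_hom_cls cls_in_carrier subst_in_lists compatible_words_over)

lemma ind_hom_compose:
  assumes "compatible V Adj \<sigma>" "compatible V Adj \<rho>"
  shows "compose (carrier (RAAG V Adj)) (ind_hom V Adj \<sigma>) (ind_hom V Adj \<rho>)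
    = ind_hom V Adj (subst_comp \<sigma> \<rho>)"
proof (rule extensionalityI[OF _ ind_hom_extensional])
  fix A
  assume "A \<in> carrier (RAAG V Adj)"
  then obtain w where "w \<in> lists (letters V)" "A = cls V Adj w"
    by (rule carrier_RAAG_cases)
  with assms show "compose (carrier (RAAG V Adj)) (ind_hom V Adj \<sigma>) (ind_hom V Adj \<rho>) A
      = ind_hom V Adj (subst_comp \<sigma> \<rho>) A"
    by (simp add: compose_eq cls_in_carrier ind_hom_cls subst_in_lists compatible_words_over
        compatible_subst_comp subst_subst)
qed (simp add: compose_def)

lemma ind_hom_hom: "compatible V Adj \<sigma> \<Longrightarrow> ind_hom V Adj \<sigma> \<in> hom (RAAG V Adj) (RAAG V Adj)"
  by (rule homI) (auto elim!: carrier_RAAG_cases simp: ind_hom_in_carrier mult_cls ind_hom_cls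
      subst_in_lists compatible_words_over)

lemma compatibleI:
  assumes words: "words_over V \<sigma>"
    and commute: "\<And>z1 z2. Adj z1 z2 \<Longrightarrow> commuting Adj (\<sigma> z1) (\<sigma> z2)"
  shows "compatible V Adj \<sigma>"
proof -
  have letter: "subst \<sigma> [l] \<in> lists (letters V)" if "l \<in> letters V" for l
    using that by (intro subst_in_lists[OF words]) auto
  have word: "subst \<sigma> u \<in> lists (letters V)" if "set u \<subseteq> letters V" for u
    using that by (intro subst_in_lists[OF words]) (auto simp: in_lists_conv_set)
  have "(subst \<sigma> p, subst \<sigma> q) \<in> raag_eq V Adj" if "(p, q) \<in> raag_step V Adj" for p q
    using that unfolding raag_step_def
  proof (elim UnE CollectE exE conjE)
    fix u v l
    assume pq: "(p, q) = (u @ [l, linv l] @ v, u @ v)"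
      and uvl: "set u \<subseteq> letters V" "set v \<subseteq> letters V" "l \<in> letters V"
    have "(subst \<sigma> u @ (subst \<sigma> [l] @ winv (subst \<sigma> [l])) @ subst \<sigma> v,
        subst \<sigma> u @ [] @ subst \<sigma> v) \<in> raag_eq V Adj"
      using uvl by (intro raag_eq_context raag_eq_append_winv letter word)
    with pq show ?thesis by (cases "snd l") simp_all
  next
    fix u v l1 l2
    assume pq: "(p, q) = (u @ [l1, l2] @ v, u @ [l2, l1] @ v)"
      and uvl: "set u \<subseteq> letters V" "set v \<subseteq> letters V" "l1 \<in> letters V" "l2 \<in> letters V"
      and "Adj (bar l1) (bar l2)"
    then have "commuting Adj (\<sigma> (fst l1)) (\<sigma> (fst l2))"
      by (simp add: commute bar_def)
    then have "commuting Adj (subst \<sigma> [l1]) (subst \<sigma> [l2])"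
      unfolding commuting_iff_fst fst_set_subst_letter .
    then have "(subst \<sigma> u @ (subst \<sigma> [l1] @ subst \<sigma> [l2]) @ subst \<sigma> v,
        subst \<sigma> u @ (subst \<sigma> [l2] @ subst \<sigma> [l1]) @ subst \<sigma> v) \<in> raag_eq V Adj"
      using uvl by (intro raag_eq_context raag_eq_swap_words letter word)
    with pq show ?thesis by simp
  qed
  then show ?thesis
    using words raag_eq_map[where f="subst \<sigma>"] by (auto simp: compatible_def)
qed

definition inverse_substs ::
    "'a set \<Rightarrow> ('a \<Rightarrow> 'a \<Rightarrow> bool) \<Rightarrow> ('a \<Rightarrow> 'a word) \<Rightarrow> ('a \<Rightarrow> 'a word) \<Rightarrow> bool" where
  "inverse_substs V Adj \<sigma> \<rho> \<longleftrightarrow> compatible V Adj \<sigma> \<and> compatible V Adj \<rho> \<and>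
     (\<forall>z\<in>V. (subst \<sigma> (\<rho> z), [(z, True)]) \<in> raag_eq V Adj) \<and>
     (\<forall>z\<in>V. (subst \<rho> (\<sigma> z), [(z, True)]) \<in> raag_eq V Adj)"

lemma inverse_substs_sym: "inverse_substs V Adj \<sigma> \<rho> \<Longrightarrow> inverse_substs V Adj \<rho> \<sigma>"
  by (auto simp: inverse_substs_def)

lemma inverse_substsI_free_reduce:
  assumes "compatible V Adj \<sigma>" "compatible V Adj \<rho>"
    and "\<And>z. z \<in> V \<Longrightarrow> free_reduce (subst \<sigma> (\<rho> z)) = [(z, True)]"
    and "\<And>z. z \<in> V \<Longrightarrow> free_reduce (subst \<rho> (\<sigma> z)) = [(z, True)]"
  shows "inverse_substs V Adj \<sigma> \<rho>"
  using assms free_reduce_raag_eq subst_in_lists compatible_words_over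
  unfolding inverse_substs_def words_over_def by metis

lemma ind_hom_compose_inverse:
  assumes "inverse_substs V Adj \<sigma> \<rho>"
  shows "compose (carrier (RAAG V Adj)) (ind_hom V Adj \<sigma>) (ind_hom V Adj \<rho>)
    = (\<lambda>A \<in> carrier (RAAG V Adj). A)"
proof -
  have "ind_hom V Adj (subst_comp \<sigma> \<rho>) = ind_hom V Adj (\<lambda>z. [(z, True)])"
    using assms unfolding inverse_substs_def
    by (intro ind_hom_eqI compatible_subst_comp compatible_generators) (auto simp: subst_comp_def)
  with assms show ?thesis
    by (simp add: inverse_substs_def ind_hom_compose ind_hom_generators)
qed

lemma ind_hom_auto: "inverse_substs V Adj \<sigma> \<rho> \<Longrightarrow> ind_hom V Adj \<sigma> \<in> auto (RAAG V Adj)"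
proof -
  assume inv: "inverse_substs V Adj \<sigma> \<rho>"
  then have compat: "compatible V Adj \<sigma>" "compatible V Adj \<rho>"
    by (auto simp: inverse_substs_def)
  have "ind_hom V Adj \<sigma> (ind_hom V Adj \<rho> A) = A" "ind_hom V Adj \<rho> (ind_hom V Adj \<sigma> A) = A"
    if "A \<in> carrier (RAAG V Adj)" for A
    using that ind_hom_compose_inverse[OF inv]
      ind_hom_compose_inverse[OF inverse_substs_sym[OF inv]]
    by (metis compose_eq restrict_apply')+
  then have "bij_betw (ind_hom V Adj \<sigma>) (carrier (RAAG V Adj)) (carrier (RAAG V Adj))"
    using compat by (intro bij_betw_byWitness[where f'="ind_hom V Adj \<rho>"])
      (auto simp: ind_hom_in_carrier)
  with compat show ?thesis
    unfolding auto_def Bij_def using ind_hom_hom ind_hom_extensional by auto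
qed

lemma group_AutoGroup_RAAG: "group (AutoGroup (RAAG V Adj))"
  by (rule group.AutoGroup[OF group_RAAG])

lemma mult_AutoGroup:
  "f \<in> auto (RAAG V Adj) \<Longrightarrow> g \<in> auto (RAAG V Adj) \<Longrightarrow>
    f \<otimes>\<^bsub>AutoGroup (RAAG V Adj)\<^esub> g = compose (carrier (RAAG V Adj)) f g"
  by (simp add: AutoGroup_def BijGroup_def auto_def)

lemma ind_hom_mult:
  "compatible V Adj \<sigma> \<Longrightarrow> compatible V Adj \<rho> \<Longrightarrow> ind_hom V Adj \<sigma> \<in> auto (RAAG V Adj) \<Longrightarrow>
    ind_hom V Adj \<rho> \<in> auto (RAAG V Adj) \<Longrightarrow>
    ind_hom V Adj \<sigma> \<otimes>\<^bsub>AutoGroup (RAAG V Adj)\<^esub> ind_hom V Adj \<rho> = ind_hom V Adj (subst_comp \<sigma> \<rho>)"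
  by (simp add: mult_AutoGroup ind_hom_compose)

lemma auto_mult_closed:
  "f \<in> auto (RAAG V Adj) \<Longrightarrow> g \<in> auto (RAAG V Adj) \<Longrightarrow>
    f \<otimes>\<^bsub>AutoGroup (RAAG V Adj)\<^esub> g \<in> auto (RAAG V Adj)"
  using monoid.m_closed[OF group.is_monoid[OF group_AutoGroup_RAAG]] by (simp add: AutoGroup_def)

lemma inv_ind_hom:
  assumes inv: "inverse_substs V Adj \<sigma> \<rho>"
  shows "inv\<^bsub>AutoGroup (RAAG V Adj)\<^esub> (ind_hom V Adj \<sigma>) = ind_hom V Adj \<rho>"
proof (rule group.inv_equality[OF group_AutoGroup_RAAG])
  have "ind_hom V Adj \<sigma> \<in> auto (RAAG V Adj)" "ind_hom V Adj \<rho> \<in> auto (RAAG V Adj)"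
    using ind_hom_auto inv inverse_substs_sym by blast+
  then show "ind_hom V Adj \<rho> \<otimes>\<^bsub>AutoGroup (RAAG V Adj)\<^esub> ind_hom V Adj \<sigma> = \<one>\<^bsub>AutoGroup (RAAG V Adj)\<^esub>"
    "ind_hom V Adj \<sigma> \<in> carrier (AutoGroup (RAAG V Adj))"
    "ind_hom V Adj \<rho> \<in> carrier (AutoGroup (RAAG V Adj))"
    using ind_hom_compose_inverse[OF inverse_substs_sym[OF inv]]
    by (simp_all add: mult_AutoGroup, simp_all add: AutoGroup_def BijGroup_def)
qed

context
  fixes V :: "'a set" and Adj :: "'a \<Rightarrow> 'a \<Rightarrow> bool"
  assumes graph: "simple_graph V Adj"
begin

lemma Adj_sym: "Adj u v \<Longrightarrow> Adj v u"
  using graph by (simp add: simple_graph_def)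

lemma Adj_irrefl: "Adj u v \<Longrightarrow> u \<noteq> v"
  using graph by (simp add: simple_graph_def)

lemma dominatesD: "dominates V Adj a b \<Longrightarrow> Adj b z \<Longrightarrow> z = a \<or> Adj a z"
  using graph by (auto simp: simple_graph_def dominates_def lk_def st_def)

lemma dominates_trans:
  assumes uv: "dominates V Adj u v" and vw: "dominates V Adj v w" and "u \<noteq> w"
  shows "dominates V Adj u w"
proof -
  have "z = u \<or> Adj u z" if "Adj w z" for z
  proof (cases "z = v")
    case True
    with that have "Adj u w"
      using dominatesD[OF uv] Adj_sym \<open>u \<noteq> w\<close> by blast
    with True show ?thesis
      using dominatesD[OF vw] Adj_sym by blast
  qed (use that dominatesD[OF uv] dominatesD[OF vw] in blast)
  then show ?thesis
    using graph by (auto simp: simple_graph_def dominates_def lk_def st_def)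
qed

end

text \<open>The substitutions behind \<tau>_{a^s, b}, c_{p^s, {v}} and \<tau>_{[p^s, q^t], c}; the
  boolean flags are the signs of the letters.\<close>
definition transv_subst :: "'a \<Rightarrow> 'a \<Rightarrow> bool \<Rightarrow> 'a \<Rightarrow> 'a word" where
  "transv_subst b a s = letter_map (b, True) [(b, True), (a, s)]"

definition pconj_subst :: "'a \<Rightarrow> bool \<Rightarrow> 'a \<Rightarrow> 'a \<Rightarrow> 'a word" where
  "pconj_subst p s v = letter_map (v, True) [linv (p, s), (v, True), (p, s)]"

definition ctransv_subst :: "'a letter \<Rightarrow> 'a letter \<Rightarrow> 'a \<Rightarrow> 'a \<Rightarrow> 'a word" where
  "ctransv_subst p q c = letter_map (c, True) [(c, True), p, q, linv p, linv q]"

lemma transv_subst_apply: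
  "transv_subst b a s z = (if z = b then [(b, True), (a, s)] else [(z, True)])"
  by (simp add: transv_subst_def letter_map_def bar_def)

lemma pconj_subst_apply:
  "pconj_subst p s v z = (if z = v then [(p, \<not> s), (v, True), (p, s)] else [(z, True)])"
  by (simp add: pconj_subst_def letter_map_def bar_def linv_def)

lemma ctransv_subst_apply:
  "ctransv_subst (p, s) (q, t) c z =
    (if z = c then [(c, True), (p, s), (q, t), (p, \<not> s), (q, \<not> t)] else [(z, True)])"
  by (simp add: ctransv_subst_def letter_map_def bar_def linv_def)

context
  fixes V :: "'a set" and Adj :: "'a \<Rightarrow> 'a \<Rightarrow> bool"
  assumes graph: "simple_graph V Adj"
begin

lemma compatible_letter_map:
  assumes "v \<in> V" "img \<in> lists (letters V)"
    and "\<And>z m. Adj v z \<Longrightarrow> m \<in> set img \<Longrightarrow> fst m = z \<or> Adj (fst m) z"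
  shows "compatible V Adj (letter_map (v, True) img)"
proof (rule compatibleI)
  show "words_over V (letter_map (v, True) img)"
    using assms by (simp add: words_over_def letter_map_def bar_def)
  fix z1 z2
  assume adj: "Adj z1 z2"
  have "\<forall>m\<in>set img. fst m = z2 \<or> Adj (fst m) z2" if "z1 = v"
    using assms(3) adj that by blast
  moreover have "\<forall>m\<in>set img. z1 = fst m \<or> Adj z1 (fst m)" if "z2 = v"
    using assms(3) Adj_sym[OF graph adj] that Adj_sym[OF graph] by metis
  ultimately show "commuting Adj (letter_map (v, True) img z1) (letter_map (v, True) img z2)"
    using adj Adj_irrefl[OF graph adj] unfolding commuting_def letter_map_def bar_def by auto
qed

lemma inverse_substs_transv:
  assumes "a \<in> V" "b \<in> V" "dominates V Adj a b" "a \<noteq> b"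
  shows "inverse_substs V Adj (transv_subst b a s) (transv_subst b a (\<not> s))"
proof -
  have "compatible V Adj (transv_subst b a s')" for s'
    unfolding transv_subst_def
    using assms by (intro compatible_letter_map) (auto dest: dominatesD[OF graph])
  then show ?thesis
    using assms(4) by (intro inverse_substsI_free_reduce) (auto simp: transv_subst_apply linv_def)
qed

lemma inverse_substs_pconj:
  assumes "p \<in> V" "v \<in> V" "dominates V Adj p v" "p \<noteq> v"
  shows "inverse_substs V Adj (pconj_subst p s v) (pconj_subst p (\<not> s) v)"
proof -
  have "compatible V Adj (pconj_subst p s' v)" for s'
    unfolding pconj_subst_def
    using assms by (intro compatible_letter_map) (auto dest: dominatesD[OF graph])
  then show ?thesis
    using assms(4) by (intro inverse_substsI_free_reduce) (auto simp: pconj_subst_apply linv_def)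
qed

lemma inverse_substs_ctransv:
  assumes "p \<in> V" "q \<in> V" "c \<in> V" "dominates V Adj p c" "dominates V Adj q c"
    and "p \<noteq> c" "q \<noteq> c" "p \<noteq> q"
  shows "inverse_substs V Adj (ctransv_subst (p, s) (q, t) c) (ctransv_subst (q, t) (p, s) c)"
proof -
  have "compatible V Adj (ctransv_subst (p', s') (q', t') c)"
    if "p' \<in> {p, q}" "q' \<in> {p, q}" for p' q' s' t'
    unfolding ctransv_subst_def
    using assms that by (intro compatible_letter_map) (auto dest: dominatesD[OF graph])
  then show ?thesis
    using assms(6-8)
    by (intro inverse_substsI_free_reduce) (auto simp: ctransv_subst_apply linv_def)
qed

end

section \<open>Substitutions inducing elements of K_Z\<close>

definition K_subst :: "'a set \<Rightarrow> ('a \<Rightarrow> 'a \<Rightarrow> bool) \<Rightarrow> 'a set \<Rightarrow> ('a \<Rightarrow> 'a word) \<Rightarrow> bool" where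
  "K_subst V Adj Z \<sigma> \<longleftrightarrow>
    compatible V Adj \<sigma> \<and> ind_hom V Adj \<sigma> \<in> auto (RAAG V Adj) \<and> ind_hom V Adj \<sigma> \<in> K V Adj Z"

lemma K_substI_gen:
  "inverse_substs V Adj \<sigma> \<rho> \<Longrightarrow> ind_hom V Adj \<sigma> \<in> K_gens V Adj Z \<Longrightarrow> K_subst V Adj Z \<sigma>"
  unfolding K_subst_def K_def
  by (auto simp: inverse_substs_def ind_hom_auto intro: generate.incl)

lemma K_subst_comp:
  assumes "K_subst V Adj Z \<sigma>" "K_subst V Adj Z \<rho>"
  shows "K_subst V Adj Z (subst_comp \<sigma> \<rho>)"
proof -
  have "ind_hom V Adj \<sigma> \<otimes>\<^bsub>AutoGroup (RAAG V Adj)\<^esub> ind_hom V Adj \<rho> = ind_hom V Adj (subst_comp \<sigma> \<rho>)"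
    using assms unfolding K_subst_def by (intro ind_hom_mult) auto
  with assms show ?thesis
    unfolding K_subst_def K_def by (metis auto_mult_closed compatible_subst_comp generate.eng)
qed

lemma K_subst_free_reduce:
  assumes "K_subst V Adj Z \<sigma>" "compatible V Adj \<sigma>'"
    and "\<And>z. z \<in> V \<Longrightarrow> free_reduce (\<sigma> z) = free_reduce (\<sigma>' z)"
  shows "K_subst V Adj Z \<sigma>'"
proof -
  have "words_over V \<sigma>" "words_over V \<sigma>'"
    using assms(1,2) compatible_words_over unfolding K_subst_def by blast+
  then have "(\<sigma> z, \<sigma>' z) \<in> raag_eq V Adj" if "z \<in> V" for z
    using that by (intro raag_eq_if_free_reduce_eq) (auto simp: words_over_def assms(3))
  with assms have "ind_hom V Adj \<sigma> = ind_hom V Adj \<sigma>'"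
    by (intro ind_hom_eqI) (auto simp: K_subst_def)
  with assms show ?thesis by (simp add: K_subst_def)
qed

context
  fixes V :: "'a set" and Adj :: "'a \<Rightarrow> 'a \<Rightarrow> bool"
  assumes graph: "simple_graph V Adj"
begin

lemma K_subst_pconj:
  assumes "p \<in> V" "v \<in> V" "dominates V Adj p v" "p \<noteq> v" "p \<in> Z" "v \<in> Z"
  shows "K_subst V Adj Z (pconj_subst p s v)"
proof (rule K_substI_gen[OF inverse_substs_pconj[OF graph assms(1-4)]])
  have "pconj V Adj (p, s) (v, True) \<in> K_gens V Adj Z"
    unfolding K_gens_def
    by (rule UnI1, rule UnI2, intro CollectI exI[of _ "(p, s)"] exI[of _ "(v, True)"])
      (use assms in \<open>simp add: bar_def ldom_def\<close>)
  then show "ind_hom V Adj (pconj_subst p s v) \<in> K_gens V Adj Z"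
    by (simp add: pconj_def pconj_subst_def)
qed

lemma K_subst_ctransv:
  assumes "p \<in> V" "q \<in> V" "c \<in> V" "dominates V Adj p c" "dominates V Adj q c"
    and "p \<noteq> c" "q \<noteq> c" "p \<noteq> q" "p \<in> Z" "q \<in> Z" "c \<in> Z"
  shows "K_subst V Adj Z (ctransv_subst (p, s) (q, t) c)"
proof (rule K_substI_gen[OF inverse_substs_ctransv[OF graph assms(1-8)]])
  have "ctransv V Adj (p, s) (q, t) (c, True) \<in> K_gens V Adj Z"
    unfolding K_gens_def
    by (intro UnI1 CollectI exI[of _ "(p, s)"] exI[of _ "(q, t)"] exI[of _ "(c, True)"])
      (use assms in \<open>simp add: bar_def ldom_def\<close>)
  then show "ind_hom V Adj (ctransv_subst (p, s) (q, t) c) \<in> K_gens V Adj Z"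
    by (simp add: ctransv_def ctransv_subst_def)
qed

end

section \<open>The conjugate of \<tau>_{[x,y],c} by \<tau>_{a,b}\<close>

definition conj_subst :: "'a \<Rightarrow> 'a \<Rightarrow> 'a \<Rightarrow> 'a \<Rightarrow> 'a \<Rightarrow> 'a \<Rightarrow> 'a word" where
  "conj_subst a b x y c =
     subst_comp (subst_comp (transv_subst b a True) (ctransv_subst (x, True) (y, True) c))
       (transv_subst b a False)"

context
  fixes V :: "'a set" and Adj :: "'a \<Rightarrow> 'a \<Rightarrow> bool" and a b c x y :: 'a
  assumes graph: "simple_graph V Adj"
    and in_V: "a \<in> V" "b \<in> V" "c \<in> V" "x \<in> V" "y \<in> V"
    and dom: "dominates V Adj a b" "a \<noteq> b" "dominates V Adj x c" "x \<noteq> c"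
      "dominates V Adj y c" "y \<noteq> c" "x \<noteq> y"
begin

lemma transv_conj_ctransv:
  "transv V Adj (a, True) (b, True)
     \<otimes>\<^bsub>AutoGroup (RAAG V Adj)\<^esub> ctransv V Adj (x, True) (y, True) (c, True)
     \<otimes>\<^bsub>AutoGroup (RAAG V Adj)\<^esub> inv\<^bsub>AutoGroup (RAAG V Adj)\<^esub> transv V Adj (a, True) (b, True)
   = ind_hom V Adj (conj_subst a b x y c)"
  and compatible_conj_subst: "compatible V Adj (conj_subst a b x y c)"
proof -
  let ?\<tau> = "transv_subst b a True" and ?\<tau>' = "transv_subst b a False"
    and ?\<kappa> = "ctransv_subst (x, True) (y, True) c"
  have \<tau>: "inverse_substs V Adj ?\<tau> ?\<tau>'"
    using inverse_substs_transv[OF graph in_V(1,2) dom(1,2), of True] by simp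
  have \<kappa>: "inverse_substs V Adj ?\<kappa> (ctransv_subst (y, True) (x, True) c)"
    using inverse_substs_ctransv[OF graph in_V(4,5,3) dom(3,5,4,6,7)] .
  have compat: "compatible V Adj ?\<tau>" "compatible V Adj ?\<tau>'" "compatible V Adj ?\<kappa>"
    using \<tau> \<kappa> by (auto simp: inverse_substs_def)
  have auto: "ind_hom V Adj ?\<tau> \<in> auto (RAAG V Adj)" "ind_hom V Adj ?\<tau>' \<in> auto (RAAG V Adj)"
    "ind_hom V Adj ?\<kappa> \<in> auto (RAAG V Adj)"
    using ind_hom_auto \<tau> \<kappa> inverse_substs_sym by blast+
  have \<tau>\<kappa>: "ind_hom V Adj ?\<tau> \<otimes>\<^bsub>AutoGroup (RAAG V Adj)\<^esub> ind_hom V Adj ?\<kappa>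
      = ind_hom V Adj (subst_comp ?\<tau> ?\<kappa>)"
    by (rule ind_hom_mult[OF compat(1,3) auto(1,3)])
  have compat_\<tau>\<kappa>: "compatible V Adj (subst_comp ?\<tau> ?\<kappa>)"
    by (rule compatible_subst_comp[OF compat(1,3)])
  show "compatible V Adj (conj_subst a b x y c)"
    unfolding conj_subst_def by (rule compatible_subst_comp[OF compat_\<tau>\<kappa> compat(2)])
  have "ind_hom V Adj (subst_comp ?\<tau> ?\<kappa>) \<in> auto (RAAG V Adj)"
    using auto_mult_closed[OF auto(1,3)] \<tau>\<kappa> by simp
  then show "transv V Adj (a, True) (b, True)
     \<otimes>\<^bsub>AutoGroup (RAAG V Adj)\<^esub> ctransv V Adj (x, True) (y, True) (c, True)
     \<otimes>\<^bsub>AutoGroup (RAAG V Adj)\<^esub> inv\<^bsub>AutoGroup (RAAG V Adj)\<^esub> transv V Adj (a, True) (b, True)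
   = ind_hom V Adj (conj_subst a b x y c)"
    unfolding conj_subst_def
    by (simp add: transv_def ctransv_def transv_subst_def[symmetric] ctransv_subst_def[symmetric]
        inv_ind_hom[OF \<tau>] \<tau>\<kappa> ind_hom_mult[OF compat_\<tau>\<kappa> compat(2) _ auto(2)])
qed

lemma K_subst_ctransv_xyc: "K_subst V Adj {a, b, c, x, y} (ctransv_subst (x, True) (y, True) c)"
  by (rule K_subst_ctransv[OF graph]) (use in_V dom in auto)

lemmas conj_subst_simps =
  conj_subst_def subst_comp_def transv_subst_apply pconj_subst_apply ctransv_subst_apply linv_def

lemma K_subst_conj_unchanged:
  assumes "(b \<notin> {c, x, y} \<and> a \<noteq> c) \<or> (b = x \<and> a = y) \<or> (b = y \<and> a = x)"
  shows "K_subst V Adj {a, b, c, x, y} (conj_subst a b x y c)"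
  by (rule K_subst_free_reduce[OF K_subst_ctransv_xyc compatible_conj_subst])
    (use assms dom in \<open>auto simp: conj_subst_simps\<close>)

lemma K_subst_conj_b_eq_c:
  assumes "b = c"
  shows "K_subst V Adj {a, b, c, x, y} (conj_subst a b x y c)"
proof (rule K_subst_free_reduce[OF _ compatible_conj_subst])
  show "K_subst V Adj {a, b, c, x, y} (subst_comp (pconj_subst a True c)
      (subst_comp (ctransv_subst (x, True) (y, True) c) (pconj_subst a False c)))"
    using in_V dom assms
    by (intro K_subst_comp K_subst_ctransv_xyc K_subst_pconj[OF graph]) auto
qed (use dom assms in \<open>auto simp: conj_subst_simps\<close>)

lemma K_subst_conj_a_eq_c:
  assumes "b \<notin> {c, x, y}" "a = c"
  shows "K_subst V Adj {a, b, c, x, y} (conj_subst a b x y c)"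
proof (rule K_subst_free_reduce[OF _ compatible_conj_subst])
  have "dominates V Adj x b" "dominates V Adj y b"
    using dom assms by (auto intro: dominates_trans[OF graph])
  then show "K_subst V Adj {a, b, c, x, y} (subst_comp (ctransv_subst (x, True) (y, True) c)
      (subst_comp (pconj_subst c True b) (subst_comp (ctransv_subst (y, True) (x, True) b)
        (pconj_subst c False b))))"
    using in_V dom assms
    by (intro K_subst_comp K_subst_ctransv_xyc K_subst_pconj[OF graph] K_subst_ctransv[OF graph])
      auto
qed (use dom assms in \<open>auto simp: conj_subst_simps\<close>)

lemma K_subst_conj_b_eq_x:
  assumes "b = x" "a \<noteq> y" "a \<noteq> c"
  shows "K_subst V Adj {a, b, c, x, y} (conj_subst a b x y c)"
proof (rule K_subst_free_reduce[OF _ compatible_conj_subst])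
  have "dominates V Adj a c"
    using dom assms by (auto intro: dominates_trans[OF graph])
  then show "K_subst V Adj {a, b, c, x, y} (subst_comp (pconj_subst x True c)
      (subst_comp (ctransv_subst (a, True) (y, True) c)
        (subst_comp (pconj_subst x False c) (ctransv_subst (x, True) (y, True) c))))"
    using in_V dom assms
    by (intro K_subst_comp K_subst_ctransv_xyc K_subst_pconj[OF graph] K_subst_ctransv[OF graph])
      auto
qed (use dom assms in \<open>auto simp: conj_subst_simps\<close>)

lemma K_subst_conj_b_eq_y:
  assumes "b = y" "a \<noteq> x" "a \<noteq> c"
  shows "K_subst V Adj {a, b, c, x, y} (conj_subst a b x y c)"
proof (rule K_subst_free_reduce[OF _ compatible_conj_subst])
  have "dominates V Adj a c"
    using dom assms by (auto intro: dominates_trans[OF graph])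
  then show "K_subst V Adj {a, b, c, x, y} (subst_comp (ctransv_subst (x, True) (y, True) c)
      (subst_comp (pconj_subst y True c)
        (subst_comp (ctransv_subst (x, True) (a, True) c) (pconj_subst y False c))))"
    using in_V dom assms
    by (intro K_subst_comp K_subst_ctransv_xyc K_subst_pconj[OF graph] K_subst_ctransv[OF graph])
      auto
qed (use dom assms in \<open>auto simp: conj_subst_simps\<close>)

lemma K_subst_conj_b_eq_x_a_eq_c:
  assumes "b = x" "a = c"
  shows "K_subst V Adj {a, b, c, x, y} (conj_subst a b x y c)"
proof (rule K_subst_free_reduce[OF _ compatible_conj_subst])
  have "dominates V Adj c x" "dominates V Adj y x"
    using dom assms by (auto intro: dominates_trans[OF graph])
  then show "K_subst V Adj {a, b, c, x, y} (subst_comp (pconj_subst c True x)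
      (subst_comp (pconj_subst x True c) (subst_comp (pconj_subst y True c)
        (subst_comp (ctransv_subst (y, True) (c, True) x)
          (subst_comp (ctransv_subst (y, True) (x, False) c)
            (subst_comp (pconj_subst x False c)
              (subst_comp (pconj_subst y False x) (pconj_subst c False x))))))))"
    using in_V dom assms
    by (intro K_subst_comp K_subst_pconj[OF graph] K_subst_ctransv[OF graph]) auto
qed (use dom assms in \<open>auto simp: conj_subst_simps\<close>)

lemma K_subst_conj_b_eq_y_a_eq_c:
  assumes "b = y" "a = c"
  shows "K_subst V Adj {a, b, c, x, y} (conj_subst a b x y c)"
proof (rule K_subst_free_reduce[OF _ compatible_conj_subst])
  have "dominates V Adj c y" "dominates V Adj x y"
    using dom assms by (auto intro: dominates_trans[OF graph])
  then show "K_subst V Adj {a, b, c, x, y} (subst_comp (pconj_subst c True y)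
      (subst_comp (pconj_subst x True y) (subst_comp (pconj_subst y True c)
        (subst_comp (ctransv_subst (y, False) (x, True) c)
          (subst_comp (ctransv_subst (c, True) (x, True) y)
            (subst_comp (pconj_subst x False c)
              (subst_comp (pconj_subst y False c) (pconj_subst c False y))))))))"
    using in_V dom assms
    by (intro K_subst_comp K_subst_pconj[OF graph] K_subst_ctransv[OF graph]) auto
qed (use dom assms in \<open>auto simp: conj_subst_simps\<close>)

lemma K_subst_conj: "K_subst V Adj {a, b, c, x, y} (conj_subst a b x y c)"
  using K_subst_conj_unchanged K_subst_conj_b_eq_c K_subst_conj_a_eq_c
    K_subst_conj_b_eq_x K_subst_conj_b_eq_y K_subst_conj_b_eq_x_a_eq_c K_subst_conj_b_eq_y_a_eq_c
  by blast

end

theorem mainTheorem4: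
  fixes V :: "'a set" and Adj :: "'a \<Rightarrow> 'a \<Rightarrow> bool" and a b c x y :: 'a
  assumes "simple_graph V Adj"
    and "a \<in> V" "b \<in> V" "c \<in> V" "x \<in> V" "y \<in> V"
    and "dominates V Adj a b" "a \<noteq> b"
    and "dominates V Adj x c" "x \<noteq> c"
    and "dominates V Adj y c" "y \<noteq> c"
    and "x \<noteq> y"
  shows "transv V Adj (a, True) (b, True)
           \<otimes>\<^bsub>AutoGroup (RAAG V Adj)\<^esub> ctransv V Adj (x, True) (y, True) (c, True)
           \<otimes>\<^bsub>AutoGroup (RAAG V Adj)\<^esub> inv\<^bsub>AutoGroup (RAAG V Adj)\<^esub> transv V Adj (a, True) (b, True)
         \<in> K V Adj {a, b, c, x, y}"
  using K_subst_conj[OF assms] unfolding transv_conj_ctransv[OF assms] K_subst_def by blast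

end
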